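(* (i) Let $p, m, r \in \mathbb N$. Then \begin{align*} S(p,m,1,r,1) &=\sum_{i=1}^{m}\frac{(-1)^{m-i}}{r^{m-i+1}}S_{p,i}^{+,-}+\frac{(-1)^{m+r}}{r^{m}}S_{p,1}^{+,-} +\frac{(-1)^{m+r-1}}{r^{m}}\overline{\zeta}(p+1)\\ &\quad +\frac{(-1)^{m}}{r^{m}}\left(\sum_{j=1}^{p}(-1)^{p-j+r}\overline{\zeta}(j)\overline{H}_{r-1}^{(p-j+1)} +(-1)^{p+r-1}\overline{\zeta}(1)H_{r-1}^{(p)}\right) +\frac{(-1)^{m+p+r}}{r^{m}}\sum_{n=1}^{r-1}\frac{\overline{H}_{n}}{n^{p}}\,. \end{align*} (ii) Let $m, r \in \mathbb N$, $p \in \mathbb N_{0}$ with $m \geq p+1$. Then \begin{align*} S(-p,m,1,r,1) =\frac{1}{p+1}\sum_{\ell=0}^{p} \binom{p+1}{\ell}B_{\ell}^{+} \left(\sum_{i=1}^{m-p-1+\ell}\frac{(-1)^{m-p-1+\ell-i}}{r^{m-p+\ell-i}}\overline{\zeta}(i) +\frac{(-1)^{m-p-1+\ell+r}}{r^{m-p-1+\ell}}(\overline{\zeta}(1)-\overline{H}_{r})\right)\,. \end{align*}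
   Context: $H_n^{(q)}=\sum_{j=1}^n j^{-q}$ for $q\in\mathbb N$; for an integer $q\ge0$, $H_n^{(-q)}=\sum_{\ell=1}^n\ell^q$. $\overline{H}_n^{(q)}=\sum_{j=1}^n (-1)^{j-1}j^{-q}$, $\overline{H}_n=\overline{H}_n^{(1)}$; these are $0$ for $n=0$. $\overline{\zeta}(s)=\sum_{n\ge1}(-1)^{n-1}n^{-s}$, $\overline{\zeta}(1)=\log 2$. For $q\in\mathbb Z$ and $m,t,r\in\mathbb N$, $S(q,m,t,r,1):=\sum_{n=1}^\infty\frac{(-1)^{n+1}H_n^{(q)}}{n^{m}(n+r)^{t}}$. $S_{p,q}^{+,-}:=\sum_{n=1}^\infty (-1)^{n-1}H_n^{(p)}/n^q$. Bernoulli numbers $B_j^{+}$: $\frac{x}{1-e^{-x}}=\sum_{j\ge0}B_j^{+}\frac{x^j}{j!}$. Empty sums are $0$. *)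

theory Defs
  imports "HOL-Analysis.Analysis" "HOL-Computational_Algebra.Formal_Power_Series"
begin

definition harmq :: "int \<Rightarrow> nat \<Rightarrow> real" where
  "harmq q n = (\<Sum>j=1..n. (real j) powi (-q))"

definition altharm :: "nat \<Rightarrow> nat \<Rightarrow> real" where
  "altharm q n = (\<Sum>j=1..n. (-1) ^ (j - 1) / (real j) ^ q)"

definition altzeta :: "nat \<Rightarrow> real" where
  "altzeta s = (\<Sum>k. (-1) ^ k / (real (k + 1)) ^ s)"

(* S(q,m,t,r,1) = sum_{n>=1} (-1)^{n+1} H_n^{(q)} / (n^m (n+r)^t) *)
definition Ssum :: "int \<Rightarrow> nat \<Rightarrow> nat \<Rightarrow> nat \<Rightarrow> real" where
  "Ssum q m t r = (\<Sum>k. (let n = k + 1 in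
       (-1) ^ (n + 1) * harmq q n / ((real n) ^ m * (real (n + r)) ^ t)))"

definition Spm :: "nat \<Rightarrow> nat \<Rightarrow> real" where
  "Spm p q = (\<Sum>k. (let n = k + 1 in (-1) ^ (n - 1) * harmq (int p) n / (real n) ^ q))"

definition bernoulli_plus :: "nat \<Rightarrow> real" where
  "bernoulli_plus j = fact j * fps_nth (fps_X / (1 - fps_exp (-1)) :: real fps) j"

end

theory Submission
  imports Defs "HOL-Real_Asymp.Real_Asymp"
begin

text \<open>Partial fractions,
  1/(n^m (n+r)) = sum_{i=1..m} (-1)^(m-i) r^-(m-i+1) n^-i + (-1)^m r^-m / (n+r),
  split S(q,m,1,r,1) into series with denominators n^i and a single series with denominator n+r.
  For q = p > 0 that series, T_r = sum_n (-1)^(n-1) H_n^(p) / (n+r), satisfies T_(r+1) = U_r - T_r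
  after the shift n -> n+1, where U_r = sum_n (-1)^(n-1) / (n^p (n+r)) is split by partial fractions
  once more into alternating zeta values and sum_n (-1)^(n-1) / (n+r) = (-1)^r (log 2 - Hbar_r).
  Unrolling the recursion from T_0 = S_(p,1)^(+,-) gives (i). For q = -p, Faulhaber's formula
  H_n^(-p) = 1/(p+1) sum_{l=0..p} binom(p+1,l) B_l^+ n^(p+1-l) makes S(-p,m,1,r,1) a combination of
  the series U_r with n^p replaced by n^(m-p-1+l), which gives (ii).\<close>

lemma partial_fraction_power_shift:
  fixes x s :: real
  assumes "x \<noteq> 0" "s \<noteq> 0" "x + s \<noteq> 0"
  shows "1 / (x ^ m * (x + s)) =
    (\<Sum>i=1..m. (-1) ^ (m - i) / s ^ (m - i + 1) / x ^ i) + (-1) ^ m / s ^ m / (x + s)"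
proof (induction m)
  case 0
  then show ?case by simp
next
  case (Suc m)
  have "1 / (x ^ Suc m * (x + s)) = 1 / s * (s / (x ^ Suc m * (x + s)))"
    using assms(2) by simp
  also have "s / (x ^ Suc m * (x + s)) = 1 / x ^ Suc m - 1 / (x ^ m * (x + s))"
    using assms by (simp add: divide_simps)
  finally have peel: "1 / (x ^ Suc m * (x + s)) = 1 / s / x ^ Suc m - 1 / s * (1 / (x ^ m * (x + s)))"
    by (simp add: right_diff_distrib)
  have shift: "(\<Sum>i=1..m. (-1) ^ (Suc m - i) / s ^ (Suc m - i + 1) / x ^ i)
      = - (1 / s) * (\<Sum>i=1..m. (-1) ^ (m - i) / s ^ (m - i + 1) / x ^ i)"
    unfolding sum_distrib_left by (intro sum.cong) (auto simp: Suc_diff_le)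
  have last: "(-1) ^ Suc m / s ^ Suc m / (x + s) = - (1 / s) * ((-1) ^ m / s ^ m / (x + s))"
    by simp
  show ?case
    unfolding peel Suc.IH sum.cl_ivl_Suc shift last by (simp add: algebra_simps)
qed

lemma sums_partial_fraction_power_shift:
  fixes c :: "nat \<Rightarrow> real" and s :: real
  assumes "s > 0"
    and "\<And>i. i \<in> {1..m} \<Longrightarrow> (\<lambda>k. c k / real (Suc k) ^ i) sums A i"
    and "(\<lambda>k. c k / (real (Suc k) + s)) sums B"
  shows "(\<lambda>k. c k / (real (Suc k) ^ m * (real (Suc k) + s))) sums
     ((\<Sum>i=1..m. (-1) ^ (m - i) / s ^ (m - i + 1) * A i) + (-1) ^ m / s ^ m * B)"
proof -
  have "(\<lambda>k. (\<Sum>i=1..m. (-1) ^ (m - i) / s ^ (m - i + 1) * (c k / real (Suc k) ^ i))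
      + (-1) ^ m / s ^ m * (c k / (real (Suc k) + s))) sums
     ((\<Sum>i=1..m. (-1) ^ (m - i) / s ^ (m - i + 1) * A i) + (-1) ^ m / s ^ m * B)"
    using assms by (intro sums_add sums_sum sums_mult) auto
  moreover have "c k / (real (Suc k) ^ m * (real (Suc k) + s)) =
      (\<Sum>i=1..m. (-1) ^ (m - i) / s ^ (m - i + 1) * (c k / real (Suc k) ^ i))
      + (-1) ^ m / s ^ m * (c k / (real (Suc k) + s))" for k
  proof -
    have "c k / (real (Suc k) ^ m * (real (Suc k) + s)) =
        c k * (1 / (real (Suc k) ^ m * (real (Suc k) + s)))"
      by simp
    also have "\<dots> = c k * ((\<Sum>i=1..m. (-1) ^ (m - i) / s ^ (m - i + 1) / real (Suc k) ^ i)
        + (-1) ^ m / s ^ m / (real (Suc k) + s))"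
      using assms(1) by (subst partial_fraction_power_shift) auto
    finally show ?thesis by (simp add: sum_distrib_left distrib_left mult_ac)
  qed
  ultimately show ?thesis by simp
qed

lemma altzeta_sums:
  assumes "j \<ge> 1"
  shows "(\<lambda>k. (-1) ^ k / real (Suc k) ^ j) sums altzeta j"
proof -
  have "(\<lambda>k. 1 / real (Suc k) ^ j) \<longlonglongrightarrow> 0"
    using assms LIMSEQ_inverse_real_of_nat by (simp add: power_one_over[symmetric] inverse_eq_divide)
  then have "summable (\<lambda>k. (-1) ^ k * (1 / real (Suc k) ^ j))"
    by (rule summable_Leibniz'(1)) (auto intro!: divide_left_mono power_mono)
  then show ?thesis
    unfolding altzeta_def by (simp add: summable_sums)
qed

lemma alternating_harmonic_shift_sums:
  "(\<lambda>k. (-1) ^ k / (real (Suc k) + real r)) sums ((-1) ^ r * (altzeta 1 - altharm 1 r))"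
proof -
  define f :: "nat \<Rightarrow> real" where "f = (\<lambda>k. (-1) ^ k / real (Suc k))"
  have "f sums altzeta 1"
    using altzeta_sums[of 1] by (simp add: f_def)
  moreover have "(\<Sum>i<r. f i) = altharm 1 r"
    unfolding altharm_def f_def sum_bounds_lt_plus1[symmetric] by simp
  ultimately have "(\<lambda>i. f (i + r)) sums (altzeta 1 - altharm 1 r)"
    by (simp add: sums_iff_shift)
  then have "(\<lambda>i. (-1) ^ r * f (i + r)) sums ((-1) ^ r * (altzeta 1 - altharm 1 r))"
    by (rule sums_mult)
  then show ?thesis
    by (simp add: f_def power_add field_simps)
qed

lemma alternating_power_shift_sums:
  assumes "r \<ge> 1"
  shows "(\<lambda>k. (-1) ^ k / (real (Suc k) ^ q * (real (Suc k) + real r))) sums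
     ((\<Sum>i=1..q. (-1) ^ (q - i) / real r ^ (q - i + 1) * altzeta i)
      + (-1) ^ (q + r) / real r ^ q * (altzeta 1 - altharm 1 r))"
  using sums_partial_fraction_power_shift[where s = "real r" and m = q,
      OF _ altzeta_sums alternating_harmonic_shift_sums]
    assms by (simp add: power_add mult.assoc)

lemma harmq_of_nat: "harmq (int p) n = (\<Sum>j=1..n. 1 / real j ^ p)"
  by (simp add: harmq_def power_int_minus inverse_eq_divide)

lemma harmq_Suc: "harmq (int p) (Suc n) = harmq (int p) n + 1 / real (Suc n) ^ p"
  by (simp add: harmq_of_nat)

lemma harmq_nonneg: "harmq (int p) n \<ge> 0"
  unfolding harmq_of_nat by (intro sum_nonneg) auto

lemma harmq_Suc_ge_1: "harmq (int p) (Suc n) \<ge> 1"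
  by (induction n) (simp_all add: harmq_of_nat add_increasing2)

lemma harmq_le_harm:
  assumes "p \<ge> 1"
  shows "harmq (int p) n \<le> harm n"
  unfolding harmq_of_nat harm_def
proof (rule sum_mono)
  fix j assume "j \<in> {1..n}"
  then have "real j ^ 1 \<le> real j ^ p"
    using assms by (intro power_increasing) auto
  with \<open>j \<in> {1..n}\<close> show "1 / real j ^ p \<le> inverse (real j)"
    by (simp add: inverse_eq_divide divide_left_mono)
qed

lemma harm_Suc_le_ln: "harm (Suc n) \<le> 1 + ln (real (Suc n))"
  using decseqD[OF decseq_harm_diff_ln, of 0 n] by (simp add: harm_def)

text \<open>H_n^(p) / n is the mean of the decreasing values 1/j^p, j <= n.\<close>
lemma harmq_div_decreasing:
  assumes "p \<ge> 1"
  shows "harmq (int p) (Suc (Suc n)) / real (Suc (Suc n)) \<le> harmq (int p) (Suc n) / real (Suc n)"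
proof -
  define h where "h = harmq (int p) (Suc n)"
  define e where "e = 1 / real (Suc (Suc n)) ^ p"
  have "real (Suc (Suc n)) ^ 1 \<le> real (Suc (Suc n)) ^ p"
    using assms by (intro power_increasing) auto
  then have "e * real (Suc n) \<le> real (Suc n) / real (Suc (Suc n))"
    unfolding e_def by (simp add: divide_simps)
  also have "\<dots> \<le> 1"
    by simp
  also have "1 \<le> h"
    unfolding h_def by (rule harmq_Suc_ge_1)
  finally have "(h + e) * real (Suc n) \<le> h * real (Suc (Suc n))"
    by (simp add: algebra_simps)
  then show ?thesis
    unfolding harmq_Suc[of p "Suc n"] h_def[symmetric] e_def[symmetric]
    by (simp add: divide_simps del: of_nat_Suc)
qed

lemma Spm_sums:
  assumes "p \<ge> 1" "i \<ge> 1"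
  shows "(\<lambda>k. (-1) ^ k * harmq (int p) (Suc k) / real (Suc k) ^ i) sums Spm p i"
proof -
  define a where "a k = harmq (int p) (Suc k) / real (Suc k) ^ i" for k
  obtain j where i: "i = Suc j"
    using assms(2) by (cases i) auto
  have a_split: "a k = harmq (int p) (Suc k) / real (Suc k) * (1 / real (Suc k) ^ j)" for k
    by (simp add: a_def i)
  have a_nonneg: "0 \<le> a k" for k
    by (simp add: a_def harmq_nonneg)
  have a_bound: "a k \<le> (1 + ln (real (Suc k))) / real (Suc k)" for k
  proof -
    have "a k \<le> harmq (int p) (Suc k) / real (Suc k)"
      unfolding a_split using harmq_nonneg by (intro mult_left_le) auto
    also have "\<dots> \<le> (1 + ln (real (Suc k))) / real (Suc k)"
      using harmq_le_harm[OF assms(1), of "Suc k"] harm_Suc_le_ln[of k] by (simp add: divide_right_mono)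
    finally show ?thesis .
  qed
  have a_lim: "a \<longlonglongrightarrow> 0"
  proof (rule tendsto_sandwich[of "\<lambda>_. 0" a sequentially
      "\<lambda>k. (1 + ln (real (Suc k))) / real (Suc k)"])
    show "(\<lambda>k. (1 + ln (real (Suc k))) / real (Suc k)) \<longlonglongrightarrow> 0"
      by real_asymp
  qed (use a_nonneg a_bound in \<open>simp_all add: always_eventually\<close>)
  have a_decreasing: "a (Suc k) \<le> a k" for k
  proof -
    have "1 / real (Suc (Suc k)) ^ j \<le> 1 / real (Suc k) ^ j"
      by (intro divide_left_mono power_mono) auto
    with harmq_div_decreasing[OF assms(1), of k] show ?thesis
      unfolding a_split by (intro mult_mono) (simp_all add: harmq_nonneg)
  qed
  have "summable (\<lambda>k. (-1) ^ k * a k)"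
    by (rule summable_Leibniz'(1)[OF a_lim a_nonneg a_decreasing])
  then show ?thesis
    unfolding Spm_def by (simp add: a_def summable_sums)
qed

lemma alternating_harmq_shift_sums_Suc:
  assumes "(\<lambda>k. (-1) ^ k * harmq (int p) (Suc k) / (real (Suc k) + real r)) sums T"
    and "(\<lambda>k. (-1) ^ k / (real (Suc k) ^ p * (real (Suc k) + real r))) sums U"
  shows "(\<lambda>k. (-1) ^ k * harmq (int p) (Suc k) / (real (Suc k) + real (Suc r))) sums (U - T)"
proof -
  define t where "t = (\<lambda>k. (-1) ^ k * harmq (int p) (Suc k) / (real (Suc k) + real r))"
  define u where "u = (\<lambda>k. (-1) ^ k / (real (Suc k) ^ p * (real (Suc k) + real r)))"
  have "t sums T" "u sums U"
    unfolding t_def u_def using assms by simp_all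
  then have "(\<lambda>k. u (Suc k) - t (Suc k)) sums ((U - u 0) - (T - t 0))"
    by (intro sums_diff) (simp_all add: sums_Suc_iff)
  moreover have "u 0 = t 0"
    by (simp add: t_def u_def harmq_of_nat)
  moreover have "u (Suc k) - t (Suc k) =
      (-1) ^ k * harmq (int p) (Suc k) / (real (Suc k) + real (Suc r))" for k
  proof -
    define h where "h = harmq (int p) (Suc k)"
    define q where "q = real (Suc (Suc k)) ^ p"
    define x where "x = real (Suc k) + real (Suc r)"
    have "q > 0" "x > 0"
      unfolding q_def x_def by simp_all
    moreover have "u (Suc k) - t (Suc k) = (-1) ^ k * ((h + 1 / q) / x - 1 / (q * x))"
      unfolding t_def u_def harmq_Suc[of p "Suc k"] h_def[symmetric] q_def[symmetric]
      by (simp add: x_def q_def diff_divide_distrib right_diff_distrib add.assoc)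
    ultimately show ?thesis
      unfolding h_def[symmetric] x_def[symmetric] by (simp add: field_simps)
  qed
  ultimately show ?thesis
    by simp
qed

lemma alternating_harmq_shift_sums:
  assumes "p \<ge> 1"
  shows "(\<lambda>k. (-1) ^ k * harmq (int p) (Suc k) / (real (Suc k) + real (Suc r))) sums
     ((-1) ^ Suc r * Spm p 1 + (-1) ^ r * altzeta (p + 1)
      + (\<Sum>j=1..p. (-1) ^ (p - j + Suc r) * altzeta j * altharm (p - j + 1) r)
      + (-1) ^ (p + r) * altzeta 1 * harmq (int p) r
      + (-1) ^ (p + Suc r) * (\<Sum>n=1..r. altharm 1 n / real n ^ p))"
proof (induction r)
  case 0
  have "(\<lambda>k. (-1) ^ k * harmq (int p) (Suc k) / (real (Suc k) + real 0)) sums Spm p 1"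
    using Spm_sums[OF assms, of 1] by simp
  moreover have
    "(\<lambda>k. (-1) ^ k / (real (Suc k) ^ p * (real (Suc k) + real 0))) sums altzeta (p + 1)"
    using altzeta_sums[of "p + 1"] by (simp add: mult.commute)
  ultimately have "(\<lambda>k. (-1) ^ k * harmq (int p) (Suc k) / (real (Suc k) + real (Suc 0))) sums
      (altzeta (p + 1) - Spm p 1)"
    by (rule alternating_harmq_shift_sums_Suc)
  then show ?case
    by (simp add: altharm_def harmq_def)
next
  case (Suc r)
  define s where "s = real (Suc r)"
  have term_Suc: "(-1) ^ (p - j + Suc (Suc r)) * altzeta j * altharm (p - j + 1) (Suc r) =
      - ((-1) ^ (p - j + Suc r) * altzeta j * altharm (p - j + 1) r)
      + (-1) ^ (p - j) / s ^ (p - j + 1) * altzeta j" for j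
  proof -
    have "(-1::real) ^ (p - j + Suc (Suc r)) * (-1) ^ r = (-1) ^ (p - j)"
      by (simp add: power_add flip: power_mult_distrib)
    then show ?thesis
      by (simp add: altharm_def s_def power_add field_simps)
  qed
  then have alt_sum_Suc:
    "(\<Sum>j=1..p. (-1) ^ (p - j + Suc (Suc r)) * altzeta j * altharm (p - j + 1) (Suc r)) =
      - (\<Sum>j=1..p. (-1) ^ (p - j + Suc r) * altzeta j * altharm (p - j + 1) r)
      + (\<Sum>j=1..p. (-1) ^ (p - j) / s ^ (p - j + 1) * altzeta j)"
    unfolding sum_negf[symmetric] sum.distrib[symmetric] by (intro sum.cong refl term_Suc)
  from alternating_harmq_shift_sums_Suc[OF Suc alternating_power_shift_sums[of "Suc r" p]]
  show ?case
    unfolding alt_sum_Suc s_def[symmetric] harmq_Suc[of p r]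
    by (simp add: s_def power_add algebra_simps diff_divide_distrib add_divide_distrib)
qed

lemma Ssum_harmq_closed_form:
  assumes p: "p \<ge> 1" and m: "m \<ge> 1" and r: "r \<ge> 1"
  shows "Ssum (int p) m 1 r =
        (\<Sum>i=1..m. (-1) ^ (m - i) / (real r) ^ (m - i + 1) * Spm p i)
        + (-1) ^ (m + r) / (real r) ^ m * Spm p 1
        + (-1) ^ (m + r - 1) / (real r) ^ m * altzeta (p + 1)
        + (-1) ^ m / (real r) ^ m *
            ((\<Sum>j=1..p. (-1) ^ (p - j + r) * altzeta j * altharm (p - j + 1) (r - 1))
             + (-1) ^ (p + r - 1) * altzeta 1 * harmq (int p) (r - 1))
        + (-1) ^ (m + p + r) / (real r) ^ m * (\<Sum>n=1..r-1. altharm 1 n / (real n) ^ p)"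
proof -
  obtain r' where r': "r = Suc r'"
    using r by (cases r) auto
  have "(\<lambda>k. (-1) ^ k * harmq (int p) (Suc k) / (real (Suc k) ^ m * (real (Suc k) + real r)))
    sums
     ((\<Sum>i=1..m. (-1) ^ (m - i) / real r ^ (m - i + 1) * Spm p i)
      + (-1) ^ m / real r ^ m *
        ((-1) ^ Suc r' * Spm p 1 + (-1) ^ r' * altzeta (p + 1)
         + (\<Sum>j=1..p. (-1) ^ (p - j + Suc r') * altzeta j * altharm (p - j + 1) r')
         + (-1) ^ (p + r') * altzeta 1 * harmq (int p) r'
         + (-1) ^ (p + Suc r') * (\<Sum>n=1..r'. altharm 1 n / real n ^ p)))"
    using r unfolding r'
    by (intro sums_partial_fraction_power_shift Spm_sums alternating_harmq_shift_sums p) auto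
  then show ?thesis
    unfolding Ssum_def r'
    by (simp add: sums_iff power_add algebra_simps add_divide_distrib diff_divide_distrib)
qed

lemma one_minus_fps_exp_neg_one_nonzero: "(1 - fps_exp (-1) :: real fps) \<noteq> 0"
proof
  assume "(1 - fps_exp (-1) :: real fps) = 0"
  then have "fps_nth (1 - fps_exp (-1) :: real fps) 1 = 0"
    by simp
  then show False
    by simp
qed

lemma fps_X_div_one_minus_fps_exp_neg_one:
  "(fps_X / (1 - fps_exp (-1)) :: real fps) * (1 - fps_exp (-1)) = fps_X"
proof (rule fps_times_divide_eq[OF one_minus_fps_exp_neg_one_nonzero])
  have "fps_nth (1 - fps_exp (-1) :: real fps) 1 \<noteq> 0"
    by simp
  from subdegree_leI[OF this]
  show "subdegree (1 - fps_exp (-1) :: real fps) \<le> subdegree (fps_X :: real fps)"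
    by simp
qed

lemma sum_fps_exp_times_one_minus_fps_exp_neg_one:
  "(\<Sum>l=1..n. fps_exp (real l)) * (1 - fps_exp (-1)) = fps_exp (real n) - (1 :: real fps)"
proof (induction n)
  case 0
  then show ?case by simp
next
  case (Suc n)
  have "fps_exp (real (Suc n)) * fps_exp (-1) = (fps_exp (real n) :: real fps)"
    by (simp flip: fps_exp_add_mult)
  with Suc show ?case
    by (simp add: algebra_simps)
qed

text \<open>Multiplying sum_{l=1..n} e^(lX) by 1 - e^-X telescopes to e^(nX) - 1 = X D(X) with
  D(X) = sum_k n^(k+1) X^k / (k+1)!, so the sum is X/(1 - e^-X) D(X); compare coefficients
  of X^p.\<close>
lemma sum_powers_bernoulli_plus:
  "(\<Sum>l=1..n. real l ^ p) =
    1 / real (p + 1) * (\<Sum>i=0..p. real ((p + 1) choose i) * bernoulli_plus i * real n ^ (p + 1 - i))"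
proof -
  define G :: "real fps" where "G = (\<Sum>l=1..n. fps_exp (real l))"
  define B :: "real fps" where "B = fps_X / (1 - fps_exp (-1))"
  define D :: "real fps" where "D = Abs_fps (\<lambda>k. real n ^ (k + 1) / fact (k + 1))"
  have "fps_X * D = fps_exp (real n) - 1"
  proof (rule fps_ext)
    show "fps_nth (fps_X * D) k = fps_nth (fps_exp (real n) - 1) k" for k
      by (cases k) (auto simp: D_def fact_Suc algebra_simps)
  qed
  then have "G * (1 - fps_exp (-1)) = B * D * (1 - fps_exp (-1))"
    using sum_fps_exp_times_one_minus_fps_exp_neg_one[of n] fps_X_div_one_minus_fps_exp_neg_one
    unfolding G_def B_def by (metis mult.assoc mult.commute)
  then have "G = B * D"
    using one_minus_fps_exp_neg_one_nonzero by simp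
  moreover have "fps_nth G p = (\<Sum>l=1..n. real l ^ p) / fact p"
    by (simp add: G_def fps_sum_nth sum_divide_distrib)
  moreover have "fps_nth (B * D) p =
      (\<Sum>i=0..p. bernoulli_plus i / fact i * (real n ^ (p - i + 1) / fact (p - i + 1)))"
    by (simp add: B_def D_def fps_mult_nth bernoulli_plus_def)
  ultimately have "(\<Sum>l=1..n. real l ^ p) / fact p =
      (\<Sum>i=0..p. bernoulli_plus i / fact i * (real n ^ (p - i + 1) / fact (p - i + 1)))"
    by simp
  also have "\<dots> =
      (\<Sum>i=0..p. real ((p + 1) choose i) * bernoulli_plus i * real n ^ (p + 1 - i)) / fact (p + 1)"
    unfolding sum_divide_distrib
  proof (rule sum.cong[OF refl])
    fix i assume "i \<in> {0..p}"
    then have "p - i + 1 = p + 1 - i"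
      and "real ((p + 1) choose i) = fact (p + 1) / (fact i * fact (p + 1 - i))"
      by (simp_all add: binomial_fact)
    then show "bernoulli_plus i / fact i * (real n ^ (p - i + 1) / fact (p - i + 1)) =
        real ((p + 1) choose i) * bernoulli_plus i * real n ^ (p + 1 - i) / fact (p + 1)"
      by simp
  qed
  also have "\<dots> = 1 / real (p + 1) *
      (\<Sum>i=0..p. real ((p + 1) choose i) * bernoulli_plus i * real n ^ (p + 1 - i)) / fact p"
    by (simp add: fact_Suc)
  finally show ?thesis
    by (simp only: divide_cancel_right fact_nonzero simp_thms)
qed

lemma harmq_neg: "harmq (- int p) n = (\<Sum>j=1..n. real j ^ p)"
  by (simp add: harmq_def)

lemma sum_powers_div_power_bernoulli_plus:
  assumes "n > 0" "m \<ge> p + 1"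
  shows "(\<Sum>j=1..n. real j ^ p) / real n ^ m =
    1 / real (p + 1) *
      (\<Sum>l=0..p. real ((p + 1) choose l) * bernoulli_plus l / real n ^ (m - p - 1 + l))"
proof -
  have "(\<Sum>l=0..p. real ((p + 1) choose l) * bernoulli_plus l * real n ^ (p + 1 - l)) / real n ^ m =
      (\<Sum>l=0..p. real ((p + 1) choose l) * bernoulli_plus l / real n ^ (m - p - 1 + l))"
    unfolding sum_divide_distrib
  proof (rule sum.cong[OF refl])
    fix l assume "l \<in> {0..p}"
    then have "real n ^ m = real n ^ (p + 1 - l) * real n ^ (m - p - 1 + l)"
      using assms(2) by (simp flip: power_add)
    with assms(1) show "real ((p + 1) choose l) * bernoulli_plus l * real n ^ (p + 1 - l) / real n ^ m =
        real ((p + 1) choose l) * bernoulli_plus l / real n ^ (m - p - 1 + l)"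
      by simp
  qed
  from arg_cong[OF this, of "\<lambda>y. 1 / real (p + 1) * y"] show ?thesis
    unfolding sum_powers_bernoulli_plus times_divide_eq_right .
qed

lemma Ssum_power_sum_closed_form:
  assumes m: "m \<ge> p + 1" and r: "r \<ge> 1"
  shows "Ssum (- int p) m 1 r =
        1 / real (p + 1) * (\<Sum>l=0..p. real ((p + 1) choose l) * bernoulli_plus l *
          ((\<Sum>i=1..m - p - 1 + l.
               (-1) ^ (m - p - 1 + l - i) / (real r) ^ (m - p + l - i) * altzeta i)
           + (-1) ^ (m - p - 1 + l + r) / (real r) ^ (m - p - 1 + l) * (altzeta 1 - altharm 1 r)))"
proof -
  define C where "C l = real ((p + 1) choose l) * bernoulli_plus l" for l
  define f where "f l k = (-1) ^ k / (real (Suc k) ^ (m - p - 1 + l) * (real (Suc k) + real r))" for l k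
  define V where "V l = (\<Sum>i=1..m - p - 1 + l.
               (-1) ^ (m - p - 1 + l - i) / (real r) ^ (m - p + l - i) * altzeta i)
           + (-1) ^ (m - p - 1 + l + r) / (real r) ^ (m - p - 1 + l) * (altzeta 1 - altharm 1 r)" for l
  have "f l sums V l" for l
  proof -
    have "(\<Sum>i=1..m - p - 1 + l.
            (-1) ^ (m - p - 1 + l - i) / (real r) ^ (m - p - 1 + l - i + 1) * altzeta i)
        = (\<Sum>i=1..m - p - 1 + l. (-1) ^ (m - p - 1 + l - i) / (real r) ^ (m - p + l - i) * altzeta i)"
    proof (rule sum.cong[OF refl])
      fix i assume "i \<in> {1..m - p - 1 + l}"
      then have "m - p - 1 + l - i + 1 = m - p + l - i"
        using m by auto
      then show "(-1) ^ (m - p - 1 + l - i) / (real r) ^ (m - p - 1 + l - i + 1) * altzeta i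
          = (-1) ^ (m - p - 1 + l - i) / (real r) ^ (m - p + l - i) * altzeta i"
        by (simp only:)
    qed
    with alternating_power_shift_sums[OF r, of "m - p - 1 + l"] show ?thesis
      unfolding f_def V_def by (simp add: power_add)
  qed
  then have "(\<lambda>k. 1 / real (p + 1) * (\<Sum>l=0..p. C l * f l k)) sums
      (1 / real (p + 1) * (\<Sum>l=0..p. C l * V l))"
    by (intro sums_mult sums_sum)
  moreover have "(-1) ^ (k + 1 + 1) * harmq (- int p) (k + 1) / (real (k + 1) ^ m * real (k + 1 + r) ^ 1)
      = 1 / real (p + 1) * (\<Sum>l=0..p. C l * f l k)" for k
  proof -
    have "(-1) ^ (k + 1 + 1) * harmq (- int p) (k + 1) / (real (k + 1) ^ m * real (k + 1 + r) ^ 1)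
        = (-1) ^ k / (real (Suc k) + real r) * ((\<Sum>j=1..Suc k. real j ^ p) / real (Suc k) ^ m)"
      by (simp add: harmq_neg)
    then show ?thesis
      unfolding sum_powers_div_power_bernoulli_plus[OF zero_less_Suc m]
      by (simp add: C_def f_def sum_distrib_left mult_ac)
  qed
  ultimately show ?thesis
    unfolding Ssum_def Let_def C_def V_def by (simp add: sums_unique[symmetric])
qed

theorem lemma4:
  shows
  "(\<forall>p m r :: nat. p \<ge> 1 \<and> m \<ge> 1 \<and> r \<ge> 1 \<longrightarrow>
      Ssum (int p) m 1 r =
        (\<Sum>i=1..m. (-1) ^ (m - i) / (real r) ^ (m - i + 1) * Spm p i)
        + (-1) ^ (m + r) / (real r) ^ m * Spm p 1
        + (-1) ^ (m + r - 1) / (real r) ^ m * altzeta (p + 1)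
        + (-1) ^ m / (real r) ^ m *
            ((\<Sum>j=1..p. (-1) ^ (p - j + r) * altzeta j * altharm (p - j + 1) (r - 1))
             + (-1) ^ (p + r - 1) * altzeta 1 * harmq (int p) (r - 1))
        + (-1) ^ (m + p + r) / (real r) ^ m * (\<Sum>n=1..r-1. altharm 1 n / (real n) ^ p))
   \<and>
   (\<forall>p m r :: nat. m \<ge> 1 \<and> r \<ge> 1 \<and> m \<ge> p + 1 \<longrightarrow>
      Ssum (- int p) m 1 r =
        1 / real (p + 1) * (\<Sum>l=0..p. real ((p + 1) choose l) * bernoulli_plus l *
          ((\<Sum>i=1..m - p - 1 + l.
               (-1) ^ (m - p - 1 + l - i) / (real r) ^ (m - p + l - i) * altzeta i)
           + (-1) ^ (m - p - 1 + l + r) / (real r) ^ (m - p - 1 + l) * (altzeta 1 - altharm 1 r))))"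
  using Ssum_harmq_closed_form Ssum_power_sum_closed_form by blast

end
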